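(* Let $d,m,n,q$ be positive integers with $d\ll m\ll n$, let $c_z>0$, let $\bm{Z}=[\bm{z}_1,\ldots,\bm{z}_n]\in\mathbb{R}^{d\times n}$ be full-rank with $\Vert\bm{Z}\Vert_\infty\leq c_z$, let $f:\mathbb{R}^d\to\mathbb{R}^m$ be analytic, and let $\bm{X}=[\bm{x}_1,\ldots,\bm{x}_n]\in\mathbb{R}^{m\times n}$ with $\bm{x}_j=f(\bm{z}_j)$ for $j=1,\ldots,n$. Let $\phi:\mathbb{R}^m\to\mathbb{R}^l$ be a $q$-order polynomial feature map (with $l=\binom{m+q}{q}$) and $\phi(\bm{X})=[\phi(\bm{x}_1),\ldots,\phi(\bm{x}_n)]\in\mathbb{R}^{l\times n}$. Then for any positive integer $q'$ obeying $\binom{d+q'}{q'}\leq\min\{l,n\}$, there exists a matrix $\bm{\Phi}\in\mathbb{R}^{l\times n}$ with $\textup{rank}(\bm{\Phi})\leq\binom{d+q'}{q'}$ such that $$\Vert\phi(\bm{X})-\bm{\Phi}\Vert_\infty\leq c_{q'},\qquad c_{q'}=\frac{c_z^{q'+1}}{(q'+1)!}\max_{\Vert\bm{z}\Vert_\infty\leq c_z}\Vert(\phi\circ f)^{(q'+1)}(\bm{z})\Vert_\infty .$$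
   Context: For a matrix $\bm{Y}$, $\Vert\bm{Y}\Vert_\infty=\max_{ij}|Y_{ij}|$. A $q$-order polynomial feature map of $\bm{x}\in\mathbb{R}^m$ is $\phi(\bm{x})=(c_\mu x_1^{\mu_1}x_2^{\mu_2}\cdots x_m^{\mu_m})_{|\mu|\leq q}\in\mathbb{R}^l$, where $\mu=(\mu_1,\ldots,\mu_m)$ ranges over all multi-indices of non-negative integers with $|\mu|=\mu_1+\cdots+\mu_m\leq q$, the parameters $c_\mu$ are nonzero real numbers, and $l=\binom{m+q}{q}$. For a smooth map $g:\mathbb{R}^d\to\mathbb{R}^l$, $g^{(k)}$ denotes its $k$-th order derivative and $\Vert g^{(k)}(\bm{z})\Vert_\infty$ denotes $\max_{i}\sup_{\Vert\bm{h}\Vert_\infty\leq 1}|D^kg_i(\bm{z})[\bm{h},\ldots,\bm{h}]|$, the largest (over output coordinates $g_i$) $\ell_\infty$-size of the $k$-th derivative. *)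

theory Defs
  imports "HOL-Analysis.Analysis"
begin

definition mat_inf_norm :: "real^'n^'m \<Rightarrow> real" where
  "mat_inf_norm Y = Max {\<bar>Y $ i $ j\<bar> | i j. True}"

definition real_analytic_at :: "(real^'d \<Rightarrow> real) \<Rightarrow> real^'d \<Rightarrow> bool" where
  "real_analytic_at g z0 \<longleftrightarrow>
     (\<exists>r>0. \<exists>a :: ('d \<Rightarrow> nat) \<Rightarrow> real.
        \<forall>z. (\<forall>i. \<bar>z $ i - z0 $ i\<bar> < r) \<longrightarrow>
           ((\<lambda>\<mu>. a \<mu> * (\<Prod>i\<in>UNIV. (z $ i - z0 $ i) ^ \<mu> i)) has_sum g z) UNIV)"

definition real_analytic :: "(real^'d \<Rightarrow> real^'m) \<Rightarrow> bool" where
  "real_analytic f \<longleftrightarrow> (\<forall>k z0. real_analytic_at (\<lambda>z. f z $ k) z0)"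

text \<open>k-th derivative form D^k g_i(z)[h,...,h], written as the k-th derivative of
  t \<mapsto> g_i(z + t h) at t = 0.\<close>
definition dform :: "(real^'d \<Rightarrow> real^'l) \<Rightarrow> nat \<Rightarrow> 'l \<Rightarrow> real^'d \<Rightarrow> real^'d \<Rightarrow> real" where
  "dform g k i z h = (deriv ^^ k) (\<lambda>t. g (z + t *\<^sub>R h) $ i) 0"

definition deriv_inf_norm :: "(real^'d \<Rightarrow> real^'l) \<Rightarrow> nat \<Rightarrow> real^'d \<Rightarrow> real" where
  "deriv_inf_norm g k z =
     Max (range (\<lambda>i. SUP h\<in>{h. \<forall>j. \<bar>h $ j\<bar> \<le> 1}. \<bar>dform g k i z h\<bar>))"

definition multi_indices :: "nat \<Rightarrow> ('m::finite \<Rightarrow> nat) set" where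
  "multi_indices q = {\<mu>. sum \<mu> UNIV \<le> q}"

text \<open>q-order polynomial feature map: coordinates (indexed via the enumeration \<nu>
  of the multi-indices) are c_\<mu> x^\<mu>.\<close>
definition poly_feature :: "('l \<Rightarrow> ('m \<Rightarrow> nat)) \<Rightarrow> (('m \<Rightarrow> nat) \<Rightarrow> real) \<Rightarrow> real^'m \<Rightarrow> real^'l" where
  "poly_feature \<nu> c x = (\<chi> i. c (\<nu> i) * (\<Prod>j\<in>UNIV. (x $ j) ^ (\<nu> i j)))"

end

theory Submission
  imports Defs "HOL-Library.Multiset" "HOL-Computational_Algebra.Polynomial"
begin

text \<open>
  Write g = phi o f and z_j for the columns of Z, which lie in the cube of radius c_z. Taylor's
  theorem with Lagrange remainder, applied to t \<mapsto> g_i(t z_j) on [0, 1], writes g_i(z_j) as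
  T_i(z_j) plus c_z^(q'+1) / (q'+1)! * D^(q'+1) g_i(\<theta> z_j)[z_j / c_z], where T_i(z) is the
  Taylor polynomial of order q' of t \<mapsto> g_i(t z) at 0, evaluated at t = 1. Since g_i is real
  analytic, T_i is a polynomial of total degree at most q' in z, the same for all columns, so
  every row of Phi = (T_i(z_j)) lies in the span of the (d + q' choose q') rows (z_j^\<alpha>)_j with
  |\<alpha>| \<le> q'. The remainder is bounded by the supremum in the statement, which is finite because
  the directional derivatives of an analytic function are locally bounded and the cube is compact.

  Analyticity is passed from f to phi o f through expansions along lines (line_analytic_at),
  which, unlike multivariate power series, are closed under products by one-variable Cauchy
  products.
\<close>

section \<open>Power series in one variable\<close>

definition has_power_series :: "(real \<Rightarrow> real) \<Rightarrow> real \<Rightarrow> real \<Rightarrow> (nat \<Rightarrow> real) \<Rightarrow> bool" where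
  "has_power_series u t0 r b \<longleftrightarrow> r > 0 \<and> (\<forall>s. \<bar>s\<bar> < r \<longrightarrow> (\<lambda>n. b n * s ^ n) sums u (t0 + s))"

lemma has_power_series_deriv:
  assumes "has_power_series u t0 r b"
  shows "has_power_series (deriv u) t0 r (diffs b)"
    and "(u has_real_derivative deriv u t0) (at t0)"
proof -
  have r: "r > 0" and u: "\<And>s. \<bar>s\<bar> < r \<Longrightarrow> (\<lambda>n. b n * s ^ n) sums u (t0 + s)"
    using assms by (auto simp: has_power_series_def)
  have summable: "summable (\<lambda>n. b n * s ^ n)" if "norm s < r" for s
    using u that sums_summable by fastforce
  define v where "v = (\<lambda>x. \<Sum>n. b n * x ^ n)"
  have v_u: "v (x - t0) = u x" if "x \<in> {x. \<bar>x - t0\<bar> < r}" for x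
    using u[of "x - t0"] that by (simp add: v_def sums_iff)
  have has_deriv: "(u has_real_derivative (\<Sum>n. diffs b n * s ^ n)) (at (t0 + s))"
    if s: "\<bar>s\<bar> < r" for s
  proof -
    have "(v has_real_derivative (\<Sum>n. diffs b n * s ^ n)) (at s)"
      unfolding v_def by (rule termdiffs_strong'[of r]) (use summable s in auto)
    then have "((\<lambda>x. v (x - t0)) has_real_derivative (\<Sum>n. diffs b n * s ^ n)) (at (t0 + s))"
      using DERIV_shift[of v _ "t0 + s" "-t0"] by simp
    then show ?thesis
    proof (rule has_field_derivative_transform_within_open[where S = "{x. \<bar>x - t0\<bar> < r}"])
      show "open {x. \<bar>x - t0\<bar> < r}"
        by (intro open_Collect_less continuous_intros)
      show "t0 + s \<in> {x. \<bar>x - t0\<bar> < r}"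
        using s by simp
    qed (fact v_u)
  qed
  have deriv_eq: "deriv u (t0 + s) = (\<Sum>n. diffs b n * s ^ n)" if "\<bar>s\<bar> < r" for s
    using DERIV_imp_deriv[OF has_deriv[OF that]] .
  show "(u has_real_derivative deriv u t0) (at t0)"
    using has_deriv[of 0] deriv_eq[of 0] r by simp
  show "has_power_series (deriv u) t0 r (diffs b)"
    unfolding has_power_series_def
  proof (intro conjI allI impI r)
    fix s :: real assume s: "\<bar>s\<bar> < r"
    have "summable (\<lambda>n. diffs b n * s ^ n)"
      by (rule termdiff_converges[of s r]) (use s summable in auto)
    then show "(\<lambda>n. diffs b n * s ^ n) sums deriv u (t0 + s)"
      using deriv_eq[OF s] by (simp add: summable_sums)
  qed
qed

lemma has_power_series_higher_deriv:
  "has_power_series u t0 r b \<Longrightarrow> has_power_series ((deriv ^^ k) u) t0 r ((diffs ^^ k) b)"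
  by (induction k) (auto intro: has_power_series_deriv)

lemma has_power_series_higher_DERIV:
  "has_power_series u t0 r b \<Longrightarrow> ((deriv ^^ k) u has_real_derivative (deriv ^^ Suc k) u t0) (at t0)"
  using has_power_series_deriv(2)[OF has_power_series_higher_deriv] by simp

lemma diffs_funpow_0: "(diffs ^^ k) b 0 = fact k * (b k :: real)"
proof (induction k arbitrary: b)
  case (Suc k)
  have "(diffs ^^ Suc k) b 0 = (diffs ^^ k) (diffs b) 0"
    by (simp add: funpow_Suc_right del: funpow.simps)
  also have "\<dots> = fact k * diffs b k"
    using Suc by simp
  also have "\<dots> = fact (Suc k) * b (Suc k)"
    by (simp add: diffs_def algebra_simps)
  finally show ?case .
qed simp

lemma has_power_series_higher_deriv_center:
  assumes "has_power_series u t0 r b"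
  shows "(deriv ^^ k) u t0 = fact k * b k"
proof -
  have "(\<lambda>n. (diffs ^^ k) b n * 0 ^ n) sums (deriv ^^ k) u (t0 + 0)"
    using has_power_series_higher_deriv[OF assms, of k] unfolding has_power_series_def
    by (metis abs_zero)
  then have "(deriv ^^ k) u t0 = (diffs ^^ k) b 0"
    using powser_sums_zero sums_unique2 by fastforce
  then show ?thesis
    by (simp add: diffs_funpow_0)
qed

lemma has_power_series_shift:
  "has_power_series (\<lambda>s. u (t0 + s)) 0 r b \<longleftrightarrow> has_power_series u t0 r b"
  by (simp add: has_power_series_def)

lemma has_power_series_scale:
  assumes "has_power_series u 0 r b" "c > 0"
  shows "has_power_series (\<lambda>t. u (c * t)) 0 (r / c) (\<lambda>n. c ^ n * b n)"
  unfolding has_power_series_def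
proof (intro conjI allI impI)
  show "r / c > 0"
    using assms by (simp add: has_power_series_def)
  fix s :: real assume "\<bar>s\<bar> < r / c"
  then have "\<bar>c * s\<bar> < r"
    using assms(2) by (simp add: abs_mult field_simps)
  then have "(\<lambda>n. b n * (c * s) ^ n) sums u (c * s)"
    using assms(1) by (auto simp: has_power_series_def)
  then show "(\<lambda>n. c ^ n * b n * s ^ n) sums u (c * (0 + s))"
    by (simp add: power_mult_distrib mult_ac)
qed

lemma has_power_series_smaller_radius:
  "has_power_series u t0 r b \<Longrightarrow> 0 < r' \<Longrightarrow> r' \<le> r \<Longrightarrow> has_power_series u t0 r' b"
  by (simp add: has_power_series_def)

lemma has_power_series_abs_summable:
  assumes "has_power_series u t0 r b" "\<bar>s\<bar> < r"
  shows "summable (\<lambda>n. \<bar>b n * s ^ n\<bar>)"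
proof -
  have "summable (\<lambda>n. b n * ((\<bar>s\<bar> + r) / 2) ^ n)"
    using assms by (auto simp: has_power_series_def sums_iff)
  then show ?thesis
    using powser_insidea[of b "(\<bar>s\<bar> + r) / 2" s] assms(2) by simp
qed

lemma has_power_series_mult:
  assumes "has_power_series u t0 r a" "has_power_series v t0 r b"
  shows "has_power_series (\<lambda>t. u t * v t) t0 r (\<lambda>n. \<Sum>i\<le>n. a i * b (n - i))"
  unfolding has_power_series_def
proof (intro conjI allI impI)
  show "r > 0"
    using assms(1) by (simp add: has_power_series_def)
  fix s :: real assume s: "\<bar>s\<bar> < r"
  have "(\<lambda>n. \<Sum>i\<le>n. a i * s ^ i * (b (n - i) * s ^ (n - i)))
      sums ((\<Sum>n. a n * s ^ n) * (\<Sum>n. b n * s ^ n))"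
    using Cauchy_product_sums[of "\<lambda>n. a n * s ^ n" "\<lambda>n. b n * s ^ n"]
      has_power_series_abs_summable[OF assms(1) s] has_power_series_abs_summable[OF assms(2) s]
    by simp
  moreover have "(\<Sum>n. a n * s ^ n) = u (t0 + s)" "(\<Sum>n. b n * s ^ n) = v (t0 + s)"
    using assms s by (auto simp: has_power_series_def sums_iff)
  moreover have "a i * s ^ i * (b (n - i) * s ^ (n - i)) = a i * b (n - i) * s ^ n"
    if "i \<le> n" for i n
    using that by (simp add: mult_ac flip: power_add)
  ultimately show "(\<lambda>n. (\<Sum>i\<le>n. a i * b (n - i)) * s ^ n) sums (u (t0 + s) * v (t0 + s))"
    by (simp add: sum_distrib_right)
qed

section \<open>Cubes and polynomial functions\<close>

definition cube :: "real \<Rightarrow> (real^'d) set" where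
  "cube a = {x. \<forall>i. \<bar>x $ i\<bar> \<le> a}"

lemma scaleR_mem_cube: "z \<in> cube a \<Longrightarrow> \<bar>t\<bar> * a \<le> b \<Longrightarrow> t *\<^sub>R z \<in> cube b"
  unfolding cube_def by (auto simp: abs_mult intro: order_trans[OF mult_left_mono])

lemma ball_subset_cube: "ball 0 r \<subseteq> cube r"
proof
  fix x :: "real^'d" assume "x \<in> ball 0 r"
  then have "\<bar>x $ i\<bar> \<le> r" for i
    using component_le_norm_cart[of x i] by simp
  then show "x \<in> cube r"
    by (simp add: cube_def)
qed

lemma compact_cube: "compact (cube a :: (real^'d::finite) set)"
proof -
  have "cube a = cbox (\<chi> i. - a) (\<chi> i. a :: real^'d)"
    by (auto simp: cube_def mem_box_cart abs_le_iff minus_le_iff)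
  then show ?thesis
    by simp
qed

definition multi_monomial :: "('d::finite \<Rightarrow> nat) \<Rightarrow> real^'d \<Rightarrow> real" where
  "multi_monomial \<alpha> x = (\<Prod>i\<in>UNIV. x $ i ^ \<alpha> i)"

inductive_set poly_fun_upto :: "nat \<Rightarrow> (real^'d::finite \<Rightarrow> real) set" for n where
  monomial: "\<alpha> \<in> multi_indices n \<Longrightarrow> multi_monomial \<alpha> \<in> poly_fun_upto n"
| zero: "(\<lambda>x. 0) \<in> poly_fun_upto n"
| add: "p \<in> poly_fun_upto n \<Longrightarrow> q \<in> poly_fun_upto n \<Longrightarrow> (\<lambda>x. p x + q x) \<in> poly_fun_upto n"
| scale: "p \<in> poly_fun_upto n \<Longrightarrow> (\<lambda>x. a * p x) \<in> poly_fun_upto n"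

lemma poly_fun_upto_mono: "p \<in> poly_fun_upto m \<Longrightarrow> m \<le> n \<Longrightarrow> p \<in> poly_fun_upto n"
  by (induction rule: poly_fun_upto.induct)
    (auto simp: multi_indices_def intro: poly_fun_upto.intros)

lemma poly_fun_upto_sum:
  "finite S \<Longrightarrow> (\<And>k. k \<in> S \<Longrightarrow> p k \<in> poly_fun_upto n) \<Longrightarrow> (\<lambda>x. \<Sum>k\<in>S. p k x) \<in> poly_fun_upto n"
  by (induction S rule: finite_induct) (auto intro: poly_fun_upto.intros)

lemma poly_fun_upto_const: "(\<lambda>x. a) \<in> poly_fun_upto n"
proof -
  have "(\<lambda>x. a * multi_monomial (\<lambda>i. 0) x) \<in> poly_fun_upto n"
    by (intro poly_fun_upto.intros) (simp add: multi_indices_def)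
  then show ?thesis
    by (simp add: multi_monomial_def)
qed

lemma multi_monomial_mult:
  "multi_monomial \<alpha> x * multi_monomial \<beta> x = multi_monomial (\<lambda>i. \<alpha> i + \<beta> i) x"
  by (simp add: multi_monomial_def power_add prod.distrib)

lemma poly_fun_upto_mult_monomial:
  assumes "\<alpha> \<in> multi_indices m" "p \<in> poly_fun_upto n"
  shows "(\<lambda>x. multi_monomial \<alpha> x * p x) \<in> poly_fun_upto (m + n)"
  using assms(2)
proof (induction rule: poly_fun_upto.induct)
  case (monomial \<beta>)
  then have "(\<lambda>i. \<alpha> i + \<beta> i) \<in> multi_indices (m + n)"
    using assms(1) by (simp add: multi_indices_def sum.distrib)
  then show ?case
    by (simp add: multi_monomial_mult poly_fun_upto.monomial)
next
  case (scale p a)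
  have "(\<lambda>x. a * (multi_monomial \<alpha> x * p x)) \<in> poly_fun_upto (m + n)"
    using scale.IH by (rule poly_fun_upto.scale)
  then show ?case
    by (simp add: mult.left_commute)
qed (auto simp: distrib_left intro: poly_fun_upto.intros)

lemma poly_fun_upto_mult:
  "p \<in> poly_fun_upto m \<Longrightarrow> q \<in> poly_fun_upto n \<Longrightarrow> (\<lambda>x. p x * q x) \<in> poly_fun_upto (m + n)"
proof (induction rule: poly_fun_upto.induct)
  case (scale p a)
  then have "(\<lambda>x. a * (p x * q x)) \<in> poly_fun_upto (m + n)"
    by (intro poly_fun_upto.scale) blast
  then show ?case
    by (simp add: mult.assoc)
qed (auto simp: distrib_right poly_fun_upto_mult_monomial intro: poly_fun_upto.intros)

lemma poly_fun_upto_scaleR_arg: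
  "p \<in> poly_fun_upto n \<Longrightarrow> (\<lambda>x. p (c *\<^sub>R x)) \<in> poly_fun_upto n"
proof (induction rule: poly_fun_upto.induct)
  case (monomial \<alpha>)
  have "multi_monomial \<alpha> (c *\<^sub>R x) = c ^ sum \<alpha> UNIV * multi_monomial \<alpha> x" for x
    by (simp add: multi_monomial_def power_mult_distrib prod.distrib power_sum)
  then show ?case
    using monomial by (simp add: poly_fun_upto.intros)
qed (auto intro: poly_fun_upto.intros)

lemma poly_fun_upto_columns_in_span:
  fixes Z :: "real^'n::finite^'d::finite"
  assumes "p \<in> poly_fun_upto n"
  shows "(\<chi> j. p (column j Z)) \<in> span ((\<lambda>\<alpha>. \<chi> j. multi_monomial \<alpha> (column j Z)) ` multi_indices n)"
  using assms
proof (induction rule: poly_fun_upto.induct)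
  case zero
  have "(\<chi> j. 0) = (0 :: real^'n)"
    by (simp add: vec_eq_iff)
  then show ?case
    by (simp add: span_zero)
next
  case (add p q)
  have "(\<chi> j. p (column j Z) + q (column j Z)) = (\<chi> j. p (column j Z)) + (\<chi> j. q (column j Z))"
    by (simp add: vec_eq_iff)
  then show ?case
    using add.IH by (simp add: span_add)
next
  case (scale p a)
  have "(\<chi> j. a * p (column j Z)) = a *\<^sub>R (\<chi> j. p (column j Z))"
    by (simp add: vec_eq_iff)
  then show ?case
    using scale.IH by (simp add: span_mul)
qed (auto intro: span_base)

lemma multi_indices_subset_counts:
  "multi_indices n \<subseteq> (\<lambda>M i. count M (Some i)) ` multisets_of_size (UNIV :: 'd::finite option set) n"
proof
  fix \<alpha> :: "'d \<Rightarrow> nat" assume \<alpha>: "\<alpha> \<in> multi_indices n"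
  define M where
    "M = (\<Sum>i\<in>UNIV. replicate_mset (\<alpha> i) (Some i)) + replicate_mset (n - sum \<alpha> UNIV) None"
  have "count M (Some i) = \<alpha> i" for i
    by (simp add: M_def count_sum)
  moreover have "M \<in> multisets_of_size UNIV n"
    using \<alpha> by (simp add: M_def multi_indices_def multisets_of_size_def)
  ultimately show "\<alpha> \<in> (\<lambda>M i. count M (Some i)) ` multisets_of_size UNIV n"
    by (intro image_eqI[of _ _ M]) auto
qed

lemma finite_multi_indices: "finite (multi_indices n :: ('d::finite \<Rightarrow> nat) set)"
  by (rule finite_subset[OF multi_indices_subset_counts])
    (auto intro!: finite_imageI finite_multisets_of_size)

lemma card_multi_indices_le:
  "card (multi_indices n :: ('d::finite \<Rightarrow> nat) set) \<le> (CARD('d) + n) choose n"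
proof -
  have "card (multi_indices n :: ('d \<Rightarrow> nat) set)
      \<le> card ((\<lambda>M i. count M (Some i)) ` multisets_of_size (UNIV :: 'd option set) n)"
    by (rule card_mono[OF _ multi_indices_subset_counts])
      (auto intro!: finite_imageI finite_multisets_of_size)
  also have "\<dots> \<le> card (multisets_of_size (UNIV :: 'd option set) n)"
    by (rule card_image_le) auto
  also have "\<dots> = (CARD('d) + n) choose n"
    by (simp add: card_multisets_of_size card_UNIV_option)
  finally show ?thesis .
qed

lemma rank_le_of_rows_poly_fun_upto:
  fixes \<Phi> :: "real^'n::finite^'l::finite" and Z :: "real^'n^'d::finite"
  assumes "\<And>i. \<exists>p\<in>poly_fun_upto k. \<Phi> $ i = (\<chi> j. p (column j Z))"
  shows "rank \<Phi> \<le> (CARD('d) + k) choose k"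
proof -
  let ?W = "(\<lambda>\<alpha>. \<chi> j. multi_monomial \<alpha> (column j Z)) ` (multi_indices k :: ('d \<Rightarrow> nat) set)"
  have "row i \<Phi> \<in> span ?W" for i
    using assms[of i] poly_fun_upto_columns_in_span by (auto simp: row_def)
  then have "rows \<Phi> \<subseteq> span ?W"
    by (auto simp: rows_def)
  then have "rank \<Phi> \<le> card ?W"
    unfolding row_rank_def by (rule dim_le_card) (simp add: finite_multi_indices)
  also have "\<dots> \<le> card (multi_indices k :: ('d \<Rightarrow> nat) set)"
    by (rule card_image_le[OF finite_multi_indices])
  also have "\<dots> \<le> (CARD('d) + k) choose k"
    by (rule card_multi_indices_le)
  finally show ?thesis .
qed

section \<open>Multivariate power series along lines\<close>

lemma has_sum_poly:
  fixes p :: "real poly"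
  shows "((\<lambda>n. coeff p n * x ^ n) has_sum poly p x) UNIV"
proof -
  have "((\<lambda>n. coeff p n * x ^ n) has_sum poly p x) {..degree p}"
    by (rule has_sum_finiteI) (simp_all add: poly_altdef)
  then show ?thesis
    by (rule has_sum_cong_neutral[THEN iffD1, rotated -1]) (auto simp: coeff_eq_0)
qed

lemma poly_abs_coeffs_nonneg: "0 \<le> \<rho> \<Longrightarrow> 0 \<le> poly (map_poly abs p) (\<rho> :: real)"
  by (simp add: poly_altdef coeff_map_poly sum_nonneg)

lemma abs_coeff_le_poly_abs_coeffs:
  fixes p :: "real poly"
  assumes "0 \<le> \<rho>"
  shows "\<bar>coeff p n\<bar> * \<rho> ^ n \<le> poly (map_poly abs p) \<rho>"
proof (rule has_sum_mono_neutral)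
  show "((\<lambda>k. \<bar>coeff p k\<bar> * \<rho> ^ k) has_sum \<bar>coeff p n\<bar> * \<rho> ^ n) {n}"
    using has_sum_finite[of "{n}" "\<lambda>k. \<bar>coeff p k\<bar> * \<rho> ^ k"] by simp
  show "((\<lambda>k. coeff (map_poly abs p) k * \<rho> ^ k) has_sum poly (map_poly abs p) \<rho>) UNIV"
    by (rule has_sum_poly)
qed (use assms in \<open>auto simp: coeff_map_poly\<close>)

text \<open>For \<rho> \<ge> 0, poly (map_poly abs p) \<rho> = (\<Sum>n. \<bar>coeff p n\<bar> * \<rho> ^ n).\<close>
lemma poly_abs_coeffs_mult_le:
  fixes p q :: "real poly"
  assumes "0 \<le> \<rho>"
  shows "poly (map_poly abs (p * q)) \<rho> \<le> poly (map_poly abs p) \<rho> * poly (map_poly abs q) \<rho>"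
proof -
  have "coeff (map_poly abs (p * q)) n * \<rho> ^ n
      \<le> coeff (map_poly abs p * map_poly abs q) n * \<rho> ^ n" for n
  proof (rule mult_right_mono)
    have "\<bar>coeff (p * q) n\<bar> \<le> (\<Sum>i\<le>n. \<bar>coeff p i * coeff q (n - i)\<bar>)"
      unfolding coeff_mult by (rule sum_abs)
    then show "coeff (map_poly abs (p * q)) n \<le> coeff (map_poly abs p * map_poly abs q) n"
      by (simp add: coeff_map_poly coeff_mult abs_mult)
  qed (use assms in simp)
  then have "poly (map_poly abs (p * q)) \<rho> \<le> poly (map_poly abs p * map_poly abs q) \<rho>"
    by (rule has_sum_mono[OF has_sum_poly has_sum_poly])
  then show ?thesis
    by simp
qed

lemma poly_abs_coeffs_prod_le:
  fixes p :: "'a \<Rightarrow> real poly"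
  assumes "finite S" "0 \<le> \<rho>"
  shows "poly (map_poly abs (\<Prod>i\<in>S. p i)) \<rho> \<le> (\<Prod>i\<in>S. poly (map_poly abs (p i)) \<rho>)"
  using assms(1)
proof (induction S rule: finite_induct)
  case (insert i S)
  have "poly (map_poly abs (p i * (\<Prod>i\<in>S. p i))) \<rho>
      \<le> poly (map_poly abs (p i)) \<rho> * poly (map_poly abs (\<Prod>i\<in>S. p i)) \<rho>"
    by (rule poly_abs_coeffs_mult_le[OF assms(2)])
  also have "\<dots> \<le> poly (map_poly abs (p i)) \<rho> * (\<Prod>i\<in>S. poly (map_poly abs (p i)) \<rho>)"
    by (rule mult_left_mono[OF insert.IH poly_abs_coeffs_nonneg[OF assms(2)]])
  finally show ?case
    using insert.hyps by simp
qed (simp add: map_poly_def)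

lemma poly_abs_coeffs_power_le:
  fixes p :: "real poly"
  assumes "0 \<le> \<rho>"
  shows "poly (map_poly abs (p ^ k)) \<rho> \<le> poly (map_poly abs p) \<rho> ^ k"
  using poly_abs_coeffs_prod_le[of "{..<k}" \<rho> "\<lambda>_. p"] assms by simp

definition line_monomial :: "('d::finite \<Rightarrow> nat) \<Rightarrow> real^'d \<Rightarrow> real^'d \<Rightarrow> real poly" where
  "line_monomial \<mu> w h = (\<Prod>i\<in>UNIV. [:w $ i, h $ i:] ^ \<mu> i)"

lemma poly_line_monomial: "poly (line_monomial \<mu> w h) s = multi_monomial \<mu> (w + s *\<^sub>R h)"
  by (simp add: line_monomial_def multi_monomial_def poly_prod algebra_simps)

lemma line_monomial_0: "line_monomial \<mu> 0 h = monom (multi_monomial \<mu> h) (sum \<mu> UNIV)"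
proof -
  have "[:0, c:] = monom c 1" for c :: real
    by (simp add: monom_Suc monom_0)
  then have "line_monomial \<mu> 0 h = (\<Prod>i\<in>UNIV. monom (h $ i ^ \<mu> i) (\<mu> i))"
    by (simp add: line_monomial_def monom_power)
  also have "\<dots> = monom (multi_monomial \<mu> h) (sum \<mu> UNIV)"
    unfolding multi_monomial_def by (induction rule: infinite_finite_induct) (auto simp: mult_monom)
  finally show ?thesis .
qed

lemma poly_abs_coeffs_line_monomial_le:
  assumes "w \<in> cube r" "h \<in> cube 1" "0 \<le> \<rho>" "\<rho> \<le> r"
  shows "poly (map_poly abs (line_monomial \<mu> w h)) \<rho> \<le> (2 * r) ^ sum \<mu> UNIV"
proof -
  have "poly (map_poly abs (line_monomial \<mu> w h)) \<rho> \<le> (\<Prod>i\<in>UNIV. (\<bar>w $ i\<bar> + \<bar>h $ i\<bar> * \<rho>) ^ \<mu> i)"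
    unfolding line_monomial_def
  proof (rule order_trans[OF poly_abs_coeffs_prod_le[OF _ assms(3)]])
    show "(\<Prod>i\<in>UNIV. poly (map_poly abs ([:w $ i, h $ i:] ^ \<mu> i)) \<rho>)
        \<le> (\<Prod>i\<in>UNIV. (\<bar>w $ i\<bar> + \<bar>h $ i\<bar> * \<rho>) ^ \<mu> i)"
    proof (rule prod_mono, rule conjI)
      fix i
      show "0 \<le> poly (map_poly abs ([:w $ i, h $ i:] ^ \<mu> i)) \<rho>"
        by (rule poly_abs_coeffs_nonneg[OF assms(3)])
      have "poly (map_poly abs [:w $ i, h $ i:]) \<rho> = \<bar>w $ i\<bar> + \<bar>h $ i\<bar> * \<rho>"
        by (simp add: map_poly_pCons)
      then show "poly (map_poly abs ([:w $ i, h $ i:] ^ \<mu> i)) \<rho> \<le> (\<bar>w $ i\<bar> + \<bar>h $ i\<bar> * \<rho>) ^ \<mu> i"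
        using poly_abs_coeffs_power_le[OF assms(3)] by metis
    qed
  qed simp
  also have "\<dots> \<le> (\<Prod>i\<in>UNIV. (2 * r) ^ \<mu> i)"
  proof (rule prod_mono, rule conjI)
    fix i
    have "\<bar>w $ i\<bar> \<le> r" "\<bar>h $ i\<bar> \<le> 1"
      using assms(1,2) by (auto simp: cube_def)
    then have "\<bar>h $ i\<bar> * \<rho> \<le> r"
      using assms(3,4) by (metis abs_ge_zero mult_left_le_one_le order_trans)
    then show "(\<bar>w $ i\<bar> + \<bar>h $ i\<bar> * \<rho>) ^ \<mu> i \<le> (2 * r) ^ \<mu> i"
      using \<open>\<bar>w $ i\<bar> \<le> r\<close> assms(3) by (intro power_mono) auto
  qed (use assms(3) in auto)
  also have "\<dots> = (2 * r) ^ sum \<mu> UNIV"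
    by (simp add: power_sum)
  finally show ?thesis .
qed

lemma infsum_coeff_line_monomial_0:
  fixes a :: "('d::finite \<Rightarrow> nat) \<Rightarrow> real"
  shows "(\<lambda>h. \<Sum>\<^sub>\<infinity>\<mu>. a \<mu> * coeff (line_monomial \<mu> 0 h) n) \<in> poly_fun_upto n"
proof -
  define T :: "('d \<Rightarrow> nat) set" where "T = {\<mu>. sum \<mu> UNIV = n}"
  have T: "finite T"
    by (rule finite_subset[OF _ finite_multi_indices[of n]]) (auto simp: T_def multi_indices_def)
  have "(\<Sum>\<^sub>\<infinity>\<mu>. a \<mu> * coeff (line_monomial \<mu> 0 h) n) = (\<Sum>\<mu>\<in>T. a \<mu> * multi_monomial \<mu> h)" for h
  proof -
    have "(\<Sum>\<^sub>\<infinity>\<mu>. a \<mu> * coeff (line_monomial \<mu> 0 h) n) = (\<Sum>\<^sub>\<infinity>\<mu>\<in>T. a \<mu> * multi_monomial \<mu> h)"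
      by (rule infsum_cong_neutral) (auto simp: T_def line_monomial_0)
    then show ?thesis
      using T by simp
  qed
  moreover have "(\<lambda>h. \<Sum>\<mu>\<in>T. a \<mu> * multi_monomial \<mu> h) \<in> poly_fun_upto n"
    using T by (intro poly_fun_upto_sum poly_fun_upto.scale poly_fun_upto.monomial)
      (auto simp: T_def multi_indices_def)
  ultimately show ?thesis
    by simp
qed

lemma abs_infsum_le_infsum:
  fixes f :: "'a \<Rightarrow> real"
  assumes "A summable_on S" "\<And>x. x \<in> S \<Longrightarrow> \<bar>f x\<bar> \<le> A x"
  shows "\<bar>infsum f S\<bar> \<le> infsum A S"
proof -
  have "(\<lambda>x. \<bar>f x\<bar>) summable_on S"
    by (rule summable_on_comparison_test[OF assms(1)]) (simp_all add: assms(2))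
  then show ?thesis
    using norm_infsum_bound[of f S] infsum_mono[of "\<lambda>x. \<bar>f x\<bar>" S A] assms by simp
qed

lemma abs_infsum_coeff_line_monomial_le:
  fixes a :: "('d::finite \<Rightarrow> nat) \<Rightarrow> real"
  assumes A: "(\<lambda>\<mu>. \<bar>a \<mu>\<bar> * (2 * r) ^ sum \<mu> UNIV) summable_on UNIV"
    and "r > 0" "w \<in> cube r" "h \<in> cube 1"
  shows "\<bar>\<Sum>\<^sub>\<infinity>\<mu>. a \<mu> * coeff (line_monomial \<mu> w h) n\<bar>
    \<le> (\<Sum>\<^sub>\<infinity>\<mu>. \<bar>a \<mu>\<bar> * (2 * r) ^ sum \<mu> UNIV / r ^ n)"
proof (rule abs_infsum_le_infsum)
  show "(\<lambda>\<mu>. \<bar>a \<mu>\<bar> * (2 * r) ^ sum \<mu> UNIV / r ^ n) summable_on UNIV"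
    using summable_on_cmult_left[OF A, of "1 / r ^ n"] by simp
  fix \<mu>
  have "\<bar>a \<mu> * coeff (line_monomial \<mu> w h) n\<bar> * r ^ n
      = \<bar>a \<mu>\<bar> * (\<bar>coeff (line_monomial \<mu> w h) n\<bar> * r ^ n)"
    by (simp add: abs_mult)
  also have "\<dots> \<le> \<bar>a \<mu>\<bar> * poly (map_poly abs (line_monomial \<mu> w h)) r"
    using abs_coeff_le_poly_abs_coeffs assms(2) by (intro mult_left_mono) auto
  also have "\<dots> \<le> \<bar>a \<mu>\<bar> * (2 * r) ^ sum \<mu> UNIV"
    using assms(2-4) by (intro mult_left_mono poly_abs_coeffs_line_monomial_le) auto
  finally show "\<bar>a \<mu> * coeff (line_monomial \<mu> w h) n\<bar> \<le> \<bar>a \<mu>\<bar> * (2 * r) ^ sum \<mu> UNIV / r ^ n"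
    using assms(2) by (simp add: field_simps)
qed

lemma double_series_sums:
  fixes g :: "'a \<Rightarrow> nat \<Rightarrow> real"
  assumes row: "\<And>\<mu>. ((\<lambda>n. g \<mu> n) has_sum R \<mu>) UNIV" and "(R has_sum T) UNIV"
    and row_abs: "\<And>\<mu>. ((\<lambda>n. \<bar>g \<mu> n\<bar>) has_sum N \<mu>) UNIV" and "N summable_on UNIV"
  shows "(\<lambda>n. \<Sum>\<^sub>\<infinity>\<mu>. g \<mu> n) sums T"
proof -
  have N_eq: "(\<Sum>\<^sub>\<infinity>n. \<bar>g \<mu> n\<bar>) = N \<mu>" for \<mu>
    using row_abs[of \<mu>] by (rule infsumI)
  have "N \<mu> \<ge> 0" for \<mu>
    using row_abs[of \<mu>] by (rule has_sum_nonneg) simp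
  then have "(\<lambda>p. norm (case p of (\<mu>, n) \<Rightarrow> g \<mu> n)) summable_on UNIV \<times> UNIV"
    using row_abs assms(4) unfolding Infinite_Sum.abs_summable_on_Sigma_iff
    by (auto simp: N_eq summable_on_def)
  then have summable: "(\<lambda>(\<mu>, n). g \<mu> n) summable_on UNIV \<times> UNIV"
    by (rule abs_summable_summable)
  have "((\<lambda>(\<mu>, n). g \<mu> n) has_sum T) (UNIV \<times> UNIV)"
    by (rule has_sum_SigmaI[OF _ assms(2) summable]) (simp add: row)
  then have swapped: "((\<lambda>(n, \<mu>). g \<mu> n) has_sum T) (UNIV \<times> UNIV)"
    by (subst (asm) has_sum_swap) simp
  have "(\<lambda>\<mu>. g \<mu> n) summable_on UNIV" for n
    using summable_on_SigmaD1[of "\<lambda>n \<mu>. g \<mu> n" UNIV "\<lambda>_. UNIV" n] swapped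
    by (auto simp: summable_on_def)
  then have "((\<lambda>\<mu>. g \<mu> n) has_sum (\<Sum>\<^sub>\<infinity>\<mu>. g \<mu> n)) UNIV" for n
    by (rule has_sum_infsum)
  then have "((\<lambda>n. \<Sum>\<^sub>\<infinity>\<mu>. g \<mu> n) has_sum T) UNIV"
    using has_sum_SigmaD[where B = "\<lambda>_. UNIV"] swapped by fastforce
  then show ?thesis
    by (rule has_sum_imp_sums)
qed

lemma sums_coeff_line_monomial:
  fixes a :: "('d::finite \<Rightarrow> nat) \<Rightarrow> real"
  assumes A: "(\<lambda>\<mu>. \<bar>a \<mu>\<bar> * (2 * r) ^ sum \<mu> UNIV) summable_on UNIV"
    and w: "w \<in> cube r" and h: "h \<in> cube 1" and s: "\<bar>s\<bar> < r"
    and S: "((\<lambda>\<mu>. a \<mu> * multi_monomial \<mu> (w + s *\<^sub>R h)) has_sum S) UNIV"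
  shows "(\<lambda>n. (\<Sum>\<^sub>\<infinity>\<mu>. a \<mu> * coeff (line_monomial \<mu> w h) n) * s ^ n) sums S"
proof -
  have "(\<lambda>n. \<Sum>\<^sub>\<infinity>\<mu>. a \<mu> * coeff (line_monomial \<mu> w h) n * s ^ n) sums S"
  proof (rule double_series_sums[OF _ S])
    show "((\<lambda>n. a \<mu> * coeff (line_monomial \<mu> w h) n * s ^ n)
        has_sum a \<mu> * multi_monomial \<mu> (w + s *\<^sub>R h)) UNIV" for \<mu>
      using has_sum_cmult_right[OF has_sum_poly[of "line_monomial \<mu> w h" s], of "a \<mu>"]
      by (simp add: poly_line_monomial mult.assoc)
    show "((\<lambda>n. \<bar>a \<mu> * coeff (line_monomial \<mu> w h) n * s ^ n\<bar>)
        has_sum \<bar>a \<mu>\<bar> * poly (map_poly abs (line_monomial \<mu> w h)) \<bar>s\<bar>) UNIV" for \<mu>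
      using has_sum_cmult_right[OF has_sum_poly[of "map_poly abs (line_monomial \<mu> w h)" "\<bar>s\<bar>"],
          of "\<bar>a \<mu>\<bar>"]
      by (simp add: coeff_map_poly abs_mult power_abs mult.assoc)
    have "\<bar>a \<mu>\<bar> * poly (map_poly abs (line_monomial \<mu> w h)) \<bar>s\<bar> \<le> \<bar>a \<mu>\<bar> * (2 * r) ^ sum \<mu> UNIV"
      for \<mu>
      using w h s by (intro mult_left_mono poly_abs_coeffs_line_monomial_le) auto
    then show "(\<lambda>\<mu>. \<bar>a \<mu>\<bar> * poly (map_poly abs (line_monomial \<mu> w h)) \<bar>s\<bar>) summable_on UNIV"
      by (rule summable_on_comparison_test[OF A]) (simp add: poly_abs_coeffs_nonneg)
  qed
  then show ?thesis
    by (simp add: infsum_cmult_left')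
qed

section \<open>Line-analytic functions\<close>

text \<open>C n w h is the n-th Taylor coefficient of F at y + w in direction h.\<close>
definition line_analytic_at :: "(real^'d::finite \<Rightarrow> real) \<Rightarrow> real^'d \<Rightarrow> bool" where
  "line_analytic_at F y \<longleftrightarrow> (\<exists>r>0. \<exists>C B.
     (\<forall>n. C n 0 \<in> poly_fun_upto n) \<and>
     (\<forall>n. \<forall>w\<in>ball 0 r. \<forall>h\<in>cube 1. \<bar>C n w h\<bar> \<le> B n) \<and>
     (\<forall>w\<in>ball 0 r. \<forall>h\<in>cube 1. has_power_series (\<lambda>s. F (y + w + s *\<^sub>R h)) 0 r (\<lambda>n. C n w h)))"

lemma line_analytic_atI:
  assumes "r > 0" "\<And>n. C n 0 \<in> poly_fun_upto n"
    and "\<And>n w h. w \<in> ball 0 r \<Longrightarrow> h \<in> cube 1 \<Longrightarrow> \<bar>C n w h\<bar> \<le> B n"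
    and "\<And>w h. w \<in> ball 0 r \<Longrightarrow> h \<in> cube 1 \<Longrightarrow>
      has_power_series (\<lambda>s. F (y + w + s *\<^sub>R h)) 0 r (\<lambda>n. C n w h)"
  shows "line_analytic_at F y"
  unfolding line_analytic_at_def using assms by blast

lemma line_analytic_atE:
  assumes "line_analytic_at F y"
  obtains r C and B :: "nat \<Rightarrow> real" where "r > 0" "\<And>n. C n 0 \<in> poly_fun_upto n"
    and "\<And>n w h. w \<in> ball 0 r \<Longrightarrow> h \<in> cube 1 \<Longrightarrow> \<bar>C n w h\<bar> \<le> B n"
    and "\<And>w h. w \<in> ball 0 r \<Longrightarrow> h \<in> cube 1 \<Longrightarrow>
      has_power_series (\<lambda>s. F (y + w + s *\<^sub>R h)) 0 r (\<lambda>n. C n w h)"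
  using assms unfolding line_analytic_at_def by blast

lemma line_analytic_at_const: "line_analytic_at (\<lambda>x. a) (y :: real^'d::finite)"
proof (rule line_analytic_atI[of 1 "\<lambda>n w h. if n = 0 then a else 0" "\<lambda>_. \<bar>a\<bar>"])
  fix w h :: "real^'d"
  have "(\<lambda>n. (if n = 0 then a else 0) * s ^ n) = (\<lambda>n. if n = 0 then a else 0)" for s :: real
    by auto
  then have "(\<lambda>n. (if n = 0 then a else 0) * s ^ n) sums a" for s :: real
    using sums_single[of 0 "\<lambda>_. a"] by simp
  then show "has_power_series (\<lambda>s. a) 0 1 (\<lambda>n. if n = 0 then a else 0)"
    by (simp add: has_power_series_def)
qed (auto simp: poly_fun_upto_const poly_fun_upto.zero)

lemma line_analytic_at_mult:
  fixes y :: "real^'d::finite"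
  assumes "line_analytic_at F y" "line_analytic_at G y"
  shows "line_analytic_at (\<lambda>x. F x * G x) y"
proof -
  obtain r1 C1 B1 where r1: "r1 > 0" and poly1: "\<And>n. C1 n 0 \<in> poly_fun_upto n"
    and bound1: "\<And>n w h. w \<in> ball 0 r1 \<Longrightarrow> h \<in> cube 1 \<Longrightarrow> \<bar>C1 n w h\<bar> \<le> B1 n"
    and series1: "\<And>w h. w \<in> ball 0 r1 \<Longrightarrow> h \<in> cube 1 \<Longrightarrow>
      has_power_series (\<lambda>s. F (y + w + s *\<^sub>R h)) 0 r1 (\<lambda>n. C1 n w h)"
    using assms(1) by (rule line_analytic_atE) blast
  obtain r2 C2 B2 where r2: "r2 > 0" and poly2: "\<And>n. C2 n 0 \<in> poly_fun_upto n"
    and bound2: "\<And>n w h. w \<in> ball 0 r2 \<Longrightarrow> h \<in> cube 1 \<Longrightarrow> \<bar>C2 n w h\<bar> \<le> B2 n"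
    and series2: "\<And>w h. w \<in> ball 0 r2 \<Longrightarrow> h \<in> cube 1 \<Longrightarrow>
      has_power_series (\<lambda>s. G (y + w + s *\<^sub>R h)) 0 r2 (\<lambda>n. C2 n w h)"
    using assms(2) by (rule line_analytic_atE) blast
  define r where "r = min r1 r2"
  have r: "0 < r" "r \<le> r1" "r \<le> r2"
    using r1 r2 by (auto simp: r_def)
  show ?thesis
  proof (rule line_analytic_atI[of r "\<lambda>n w h. \<Sum>i\<le>n. C1 i w h * C2 (n - i) w h"
        "\<lambda>n. \<Sum>i\<le>n. \<bar>B1 i\<bar> * \<bar>B2 (n - i)\<bar>"])
    show "(\<lambda>h. \<Sum>i\<le>n. C1 i 0 h * C2 (n - i) 0 h) \<in> poly_fun_upto n" for n
    proof (rule poly_fun_upto_sum)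
      fix i assume "i \<in> {..n}"
      then show "(\<lambda>h. C1 i 0 h * C2 (n - i) 0 h) \<in> poly_fun_upto n"
        using poly_fun_upto_mult[OF poly1 poly2, of i "n - i"] by simp
    qed simp
  next
    fix n and w h :: "real^'d" assume w: "w \<in> ball 0 r" and h: "h \<in> cube 1"
    then have "\<bar>C1 i w h\<bar> * \<bar>C2 (n - i) w h\<bar> \<le> \<bar>B1 i\<bar> * \<bar>B2 (n - i)\<bar>" for i
      using bound1 bound2 r by (intro mult_mono) (auto intro: order_trans[OF _ abs_ge_self])
    then show "\<bar>\<Sum>i\<le>n. C1 i w h * C2 (n - i) w h\<bar> \<le> (\<Sum>i\<le>n. \<bar>B1 i\<bar> * \<bar>B2 (n - i)\<bar>)"
      by (intro order_trans[OF sum_abs] sum_mono) (simp add: abs_mult)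
  next
    fix w h :: "real^'d" assume w: "w \<in> ball 0 r" and h: "h \<in> cube 1"
    then have "has_power_series (\<lambda>s. F (y + w + s *\<^sub>R h)) 0 r1 (\<lambda>n. C1 n w h)"
      and "has_power_series (\<lambda>s. G (y + w + s *\<^sub>R h)) 0 r2 (\<lambda>n. C2 n w h)"
      using series1 series2 r by auto
    then show "has_power_series (\<lambda>s. F (y + w + s *\<^sub>R h) * G (y + w + s *\<^sub>R h)) 0 r
        (\<lambda>n. \<Sum>i\<le>n. C1 i w h * C2 (n - i) w h)"
      using r by (intro has_power_series_mult) (auto intro: has_power_series_smaller_radius)
  qed (fact r)
qed

lemma line_analytic_at_prod:
  "finite S \<Longrightarrow> (\<And>k. k \<in> S \<Longrightarrow> line_analytic_at (F k) y) \<Longrightarrow> line_analytic_at (\<lambda>x. \<Prod>k\<in>S. F k x) y"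
  by (induction S rule: finite_induct) (auto intro: line_analytic_at_const line_analytic_at_mult)

lemma line_analytic_at_power: "line_analytic_at F y \<Longrightarrow> line_analytic_at (\<lambda>x. F x ^ k) y"
  by (induction k) (auto intro: line_analytic_at_const line_analytic_at_mult)

lemma line_analytic_at_poly_coeffs:
  fixes y :: "real^'d::finite"
  assumes "line_analytic_at F y"
  obtains P where "\<And>m. P m \<in> poly_fun_upto m"
    and "\<And>h. h \<in> cube 1 \<Longrightarrow> \<exists>\<rho>. has_power_series (\<lambda>t. F (y + t *\<^sub>R h)) 0 \<rho> (\<lambda>m. P m h)"
proof -
  obtain r C where r: "r > 0" and poly: "\<And>n. C n 0 \<in> poly_fun_upto n"
    and series: "\<And>w h. w \<in> ball 0 r \<Longrightarrow> h \<in> cube 1 \<Longrightarrow>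
      has_power_series (\<lambda>s. F (y + w + s *\<^sub>R h)) 0 r (\<lambda>n. C n w h)"
    using assms by (rule line_analytic_atE) blast
  show ?thesis
  proof (rule that)
    show "C m 0 \<in> poly_fun_upto m" for m
      by (rule poly)
    fix h :: "real^'d" assume "h \<in> cube 1"
    then have "has_power_series (\<lambda>s. F (y + 0 + s *\<^sub>R h)) 0 r (\<lambda>n. C n 0 h)"
      using series[of 0 h] r by simp
    then show "\<exists>\<rho>. has_power_series (\<lambda>t. F (y + t *\<^sub>R h)) 0 \<rho> (\<lambda>m. C m 0 h)"
      by auto
  qed
qed

lemma line_analytic_at_ray_series:
  assumes "line_analytic_at F y" "h \<in> cube 1"
  obtains \<rho> b where "has_power_series (\<lambda>t. F (y + t *\<^sub>R h)) 0 \<rho> b"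
  using line_analytic_at_poly_coeffs[OF assms(1)] assms(2) by metis

lemma line_analytic_at_dform_bounded:
  assumes "line_analytic_at (\<lambda>x. g x $ i) y"
  obtains e K where "e > 0" "\<And>z h. z \<in> ball y e \<Longrightarrow> h \<in> cube 1 \<Longrightarrow> \<bar>dform g n i z h\<bar> \<le> K"
proof -
  obtain r C B where r: "r > 0"
    and bound: "\<And>n w h. w \<in> ball 0 r \<Longrightarrow> h \<in> cube 1 \<Longrightarrow> \<bar>C n w h\<bar> \<le> B n"
    and series: "\<And>w h. w \<in> ball 0 r \<Longrightarrow> h \<in> cube 1 \<Longrightarrow>
      has_power_series (\<lambda>s. g (y + w + s *\<^sub>R h) $ i) 0 r (\<lambda>n. C n w h)"
    using assms by (rule line_analytic_atE) blast
  have "\<bar>dform g n i z h\<bar> \<le> fact n * B n" if z: "z \<in> ball y r" and h: "h \<in> cube 1" for z h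
  proof -
    have w: "z - y \<in> ball 0 r"
      using z by (simp add: dist_norm norm_minus_commute)
    have "dform g n i z h = fact n * C n (z - y) h"
      using has_power_series_higher_deriv_center[OF series[OF w h]] by (simp add: dform_def)
    then show ?thesis
      using bound[OF w h, of n] by (simp add: abs_mult)
  qed
  then show ?thesis
    using that r by blast
qed

lemma real_analytic_atE:
  fixes F :: "real^'d::finite \<Rightarrow> real"
  assumes "real_analytic_at F y"
  obtains r0 a where "r0 > 0"
    and "\<And>z. (\<forall>i. \<bar>z $ i - y $ i\<bar> < r0) \<Longrightarrow> ((\<lambda>\<mu>. a \<mu> * multi_monomial \<mu> (z - y)) has_sum F z) UNIV"
    and "\<And>\<rho>. 0 \<le> \<rho> \<Longrightarrow> \<rho> < r0 \<Longrightarrow> (\<lambda>\<mu>. \<bar>a \<mu>\<bar> * \<rho> ^ sum \<mu> UNIV) summable_on UNIV"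
proof -
  obtain r0 a where r0: "r0 > 0" and expansion: "\<And>z. (\<forall>i. \<bar>z $ i - y $ i\<bar> < r0) \<Longrightarrow>
      ((\<lambda>\<mu>. a \<mu> * multi_monomial \<mu> (z - y)) has_sum F z) UNIV"
    using assms unfolding real_analytic_at_def multi_monomial_def by auto
  have "(\<lambda>\<mu>. \<bar>a \<mu>\<bar> * \<rho> ^ sum \<mu> UNIV) summable_on UNIV" if "0 \<le> \<rho>" "\<rho> < r0" for \<rho>
  proof -
    have "((\<lambda>\<mu>. a \<mu> * multi_monomial \<mu> (\<chi> i. \<rho>)) has_sum F (y + (\<chi> i. \<rho>))) UNIV"
      using expansion[of "y + (\<chi> i. \<rho>)"] that by simp
    then have "(\<lambda>\<mu>. a \<mu> * \<rho> ^ sum \<mu> UNIV) summable_on UNIV"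
      by (auto simp: summable_on_def multi_monomial_def power_sum)
    then have "(\<lambda>\<mu>. norm (a \<mu> * \<rho> ^ sum \<mu> UNIV)) summable_on UNIV"
      by (rule summable_on_iff_abs_summable_on_real[THEN iffD1])
    then show ?thesis
      using that by (simp add: abs_mult)
  qed
  then show ?thesis
    using that r0 expansion by blast
qed

lemma real_analytic_at_imp_line_analytic_at:
  fixes F :: "real^'d::finite \<Rightarrow> real"
  assumes "real_analytic_at F y"
  shows "line_analytic_at F y"
proof -
  obtain r0 a where r0: "r0 > 0"
    and expansion: "\<And>z. (\<forall>i. \<bar>z $ i - y $ i\<bar> < r0) \<Longrightarrow>
      ((\<lambda>\<mu>. a \<mu> * multi_monomial \<mu> (z - y)) has_sum F z) UNIV"
    and abs_summable: "\<And>\<rho>. 0 \<le> \<rho> \<Longrightarrow> \<rho> < r0 \<Longrightarrow>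
      (\<lambda>\<mu>. \<bar>a \<mu>\<bar> * \<rho> ^ sum \<mu> UNIV) summable_on UNIV"
    using assms by (rule real_analytic_atE) blast
  \<comment> \<open>The points y + w + s h with w \<in> ball 0 r, h \<in> cube 1, \<bar>s\<bar> < r stay within 2 r < r0 of y.\<close>
  define r where "r = r0 / 4"
  have r: "r > 0" "2 * r < r0"
    using r0 by (auto simp: r_def)
  have A: "(\<lambda>\<mu>. \<bar>a \<mu>\<bar> * (2 * r) ^ sum \<mu> UNIV) summable_on UNIV"
    using r by (intro abs_summable) auto
  define C where "C = (\<lambda>n w h. \<Sum>\<^sub>\<infinity>\<mu>. a \<mu> * coeff (line_monomial \<mu> w h) n)"
  show ?thesis
  proof (rule line_analytic_atI[of r C "\<lambda>n. \<Sum>\<^sub>\<infinity>\<mu>. \<bar>a \<mu>\<bar> * (2 * r) ^ sum \<mu> UNIV / r ^ n"])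
    show "C n 0 \<in> poly_fun_upto n" for n
      unfolding C_def by (rule infsum_coeff_line_monomial_0)
  next
    fix n and w h :: "real^'d" assume "w \<in> ball 0 r" "h \<in> cube 1"
    then show "\<bar>C n w h\<bar> \<le> (\<Sum>\<^sub>\<infinity>\<mu>. \<bar>a \<mu>\<bar> * (2 * r) ^ sum \<mu> UNIV / r ^ n)"
      unfolding C_def using subsetD[OF ball_subset_cube] r
      by (intro abs_infsum_coeff_line_monomial_le[OF A]) auto
  next
    fix w h :: "real^'d" assume w: "w \<in> ball 0 r" and h: "h \<in> cube 1"
    then have w': "w \<in> cube r"
      using ball_subset_cube by blast
    show "has_power_series (\<lambda>s. F (y + w + s *\<^sub>R h)) 0 r (\<lambda>n. C n w h)"
      unfolding has_power_series_def
    proof (intro conjI allI impI r)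
      fix s :: real assume s: "\<bar>s\<bar> < r"
      have "\<bar>(w + s *\<^sub>R h) $ i\<bar> < r0" for i
      proof -
        have "\<bar>w $ i\<bar> \<le> r" "\<bar>h $ i\<bar> \<le> 1"
          using w' h by (auto simp: cube_def)
        moreover have "\<bar>s * h $ i\<bar> \<le> \<bar>s\<bar>"
          using \<open>\<bar>h $ i\<bar> \<le> 1\<close> by (simp add: abs_mult mult_left_le)
        ultimately show ?thesis
          using s r abs_triangle_ineq[of "w $ i" "s * h $ i"] by simp
      qed
      then have "((\<lambda>\<mu>. a \<mu> * multi_monomial \<mu> (w + s *\<^sub>R h)) has_sum F (y + w + s *\<^sub>R h)) UNIV"
        using expansion[of "y + w + s *\<^sub>R h"] by simp
      then show "(\<lambda>n. C n w h * s ^ n) sums F (y + w + (0 + s) *\<^sub>R h)"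
        unfolding C_def using sums_coeff_line_monomial[OF A w' h s] by simp
    qed
  qed (fact r)
qed

lemma line_analytic_at_poly_feature:
  assumes "real_analytic f"
  shows "line_analytic_at (\<lambda>x. poly_feature \<nu> c (f x) $ i) y"
proof -
  have "line_analytic_at (\<lambda>x. f x $ j) y" for j
    using assms real_analytic_at_imp_line_analytic_at by (auto simp: real_analytic_def)
  then have "line_analytic_at (\<lambda>x. c (\<nu> i) * (\<Prod>j\<in>UNIV. f x $ j ^ \<nu> i j)) y"
    by (intro line_analytic_at_mult line_analytic_at_const line_analytic_at_prod
        line_analytic_at_power) auto
  then show ?thesis
    by (simp add: poly_feature_def)
qed

section \<open>Taylor expansion along rays\<close>

lemma has_power_series_ray_scale:
  fixes h :: "'a::real_vector"
  assumes "has_power_series (\<lambda>t. F (y + t *\<^sub>R h)) 0 \<rho> b" "c > 0"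
  shows "has_power_series (\<lambda>t. F (y + t *\<^sub>R (c *\<^sub>R h))) 0 (\<rho> / c) (\<lambda>m. c ^ m * b m)"
  using has_power_series_scale[OF assms] by (simp add: mult.commute)

lemma taylor_along_ray:
  fixes F :: "real^'d::finite \<Rightarrow> real"
  assumes analytic: "\<And>y. line_analytic_at F y" and c: "c > 0" and z: "z \<in> cube c"
  obtains \<theta> where "0 < \<theta>" "\<theta> < 1"
    "F z - (\<Sum>m\<le>k. (deriv ^^ m) (\<lambda>t. F (t *\<^sub>R z)) 0 / fact m)
      = c ^ Suc k / fact (Suc k) * (deriv ^^ Suc k) (\<lambda>t. F (\<theta> *\<^sub>R z + t *\<^sub>R ((1 / c) *\<^sub>R z))) 0"
proof -
  define u where "u = (\<lambda>t. F (t *\<^sub>R z))"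
  define h where "h = (1 / c) *\<^sub>R z"
  have h: "h \<in> cube 1"
    using scaleR_mem_cube[OF z, of "1 / c"] c by (simp add: h_def)
  have z_eq: "z = c *\<^sub>R h"
    using c by (simp add: h_def)
  have u_series: "has_power_series u t0 (\<rho> / c) (\<lambda>m. c ^ m * b m)"
    if "has_power_series (\<lambda>t. F (t0 *\<^sub>R z + t *\<^sub>R h)) 0 \<rho> b" for t0 \<rho> b
  proof -
    have "has_power_series (\<lambda>s. u (t0 + s)) 0 (\<rho> / c) (\<lambda>m. c ^ m * b m)"
      using has_power_series_ray_scale[OF that c]
      by (simp add: u_def z_eq scaleR_scaleR distrib_right scaleR_add_left)
    then show ?thesis
      by (simp only: has_power_series_shift)
  qed
  have "\<exists>\<theta>. 0 < \<theta> \<and> \<theta> < 1 \<and>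
      u 1 = (\<Sum>m<Suc k. (deriv ^^ m) u 0 / fact m * 1 ^ m)
        + (deriv ^^ Suc k) u \<theta> / fact (Suc k) * 1 ^ Suc k"
  proof (rule Maclaurin[where diff = "\<lambda>m. (deriv ^^ m) u"])
    have "((deriv ^^ m) u has_real_derivative (deriv ^^ Suc m) u t) (at t)" for m t
    proof -
      obtain \<rho> b where "has_power_series (\<lambda>s. F (t *\<^sub>R z + s *\<^sub>R h)) 0 \<rho> b"
        using line_analytic_at_ray_series[OF analytic h] by blast
      then show ?thesis
        by (rule has_power_series_higher_DERIV[OF u_series])
    qed
    then show "\<forall>m t. m < Suc k \<and> 0 \<le> t \<and> t \<le> 1 \<longrightarrow>
        ((deriv ^^ m) u has_real_derivative (deriv ^^ Suc m) u t) (at t)"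
      by blast
  qed auto
  then obtain \<theta> where \<theta>: "0 < \<theta>" "\<theta> < 1"
    and taylor: "u 1 = (\<Sum>m\<le>k. (deriv ^^ m) u 0 / fact m) + (deriv ^^ Suc k) u \<theta> / fact (Suc k)"
    by (auto simp: lessThan_Suc_atMost)
  obtain \<rho> b where series: "has_power_series (\<lambda>s. F (\<theta> *\<^sub>R z + s *\<^sub>R h)) 0 \<rho> b"
    using line_analytic_at_ray_series[OF analytic h] by blast
  have "(deriv ^^ Suc k) u \<theta> = c ^ Suc k * (deriv ^^ Suc k) (\<lambda>s. F (\<theta> *\<^sub>R z + s *\<^sub>R h)) 0"
    using has_power_series_higher_deriv_center[OF u_series[OF series], of "Suc k"]
      has_power_series_higher_deriv_center[OF series, of "Suc k"]
    by (simp only: mult.left_commute)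
  then show ?thesis
    using that[OF \<theta>] taylor by (simp add: u_def h_def)
qed

lemma taylor_poly_along_ray:
  fixes F :: "real^'d::finite \<Rightarrow> real"
  assumes "line_analytic_at F 0" "c > 0"
  obtains p where "p \<in> poly_fun_upto k"
    and "\<And>z. z \<in> cube c \<Longrightarrow> (\<Sum>m\<le>k. (deriv ^^ m) (\<lambda>t. F (t *\<^sub>R z)) 0 / fact m) = p z"
proof -
  obtain P where P: "\<And>m. P m \<in> poly_fun_upto m"
    and series: "\<And>h. h \<in> cube 1 \<Longrightarrow> \<exists>\<rho>. has_power_series (\<lambda>t. F (0 + t *\<^sub>R h)) 0 \<rho> (\<lambda>m. P m h)"
    using line_analytic_at_poly_coeffs[OF assms(1)] by blast
  show ?thesis
  proof (rule that)
    show "(\<lambda>z. \<Sum>m\<le>k. c ^ m * P m ((1 / c) *\<^sub>R z)) \<in> poly_fun_upto k"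
      using P by (intro poly_fun_upto_sum poly_fun_upto.scale poly_fun_upto_scaleR_arg)
        (auto intro: poly_fun_upto_mono)
    fix z :: "real^'d" assume "z \<in> cube c"
    define h where "h = (1 / c) *\<^sub>R z"
    have "h \<in> cube 1"
      using scaleR_mem_cube[OF \<open>z \<in> cube c\<close>, of "1 / c"] assms(2) by (simp add: h_def)
    then obtain \<rho> where "has_power_series (\<lambda>t. F (0 + t *\<^sub>R h)) 0 \<rho> (\<lambda>m. P m h)"
      using series by blast
    from has_power_series_ray_scale[OF this assms(2)]
    have "(deriv ^^ m) (\<lambda>t. F (t *\<^sub>R z)) 0 = fact m * (c ^ m * P m h)" for m
      using has_power_series_higher_deriv_center assms(2) by (simp add: h_def)
    then show "(\<Sum>m\<le>k. (deriv ^^ m) (\<lambda>t. F (t *\<^sub>R z)) 0 / fact m)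
        = (\<Sum>m\<le>k. c ^ m * P m ((1 / c) *\<^sub>R z))"
      by (simp add: h_def)
  qed
qed

section \<open>Uniform bounds\<close>

lemma compact_locally_bounded:
  fixes S :: "'a::metric_space set" and \<phi> :: "'a \<Rightarrow> 'b \<Rightarrow> real"
  assumes "compact S"
    and "\<And>y. y \<in> S \<Longrightarrow> \<exists>e>0. \<exists>B. \<forall>z\<in>ball y e. \<forall>h\<in>H. \<phi> z h \<le> B"
  obtains B where "\<And>z h. z \<in> S \<Longrightarrow> h \<in> H \<Longrightarrow> \<phi> z h \<le> B"
proof -
  obtain e B where eB: "\<And>y. y \<in> S \<Longrightarrow> e y > 0 \<and> (\<forall>z\<in>ball y (e y). \<forall>h\<in>H. \<phi> z h \<le> B y)"
    using assms(2) by metis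
  obtain K where K: "K \<subseteq> S" "finite K" "S \<subseteq> (\<Union>y\<in>K. ball y (e y))"
    by (rule compactE_image[OF assms(1), of S "\<lambda>y. ball y (e y)"]) (use eB in auto)
  have "\<phi> z h \<le> (\<Sum>y\<in>K. \<bar>B y\<bar>)" if "z \<in> S" "h \<in> H" for z h
  proof -
    obtain y where y: "y \<in> K" "z \<in> ball y (e y)"
      using K \<open>z \<in> S\<close> by auto
    then have "\<phi> z h \<le> \<bar>B y\<bar>"
      using eB[of y] K \<open>h \<in> H\<close> by force
    also have "\<dots> \<le> (\<Sum>y\<in>K. \<bar>B y\<bar>)"
      by (rule member_le_sum) (use y K in auto)
    finally show ?thesis .
  qed
  then show ?thesis
    using that by blast
qed

lemma dform_bounded_on_compact:
  fixes g :: "real^'d::finite \<Rightarrow> real^'l::finite"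
  assumes "\<And>i y. line_analytic_at (\<lambda>x. g x $ i) y" "compact S"
  obtains K where "\<And>i z h. z \<in> S \<Longrightarrow> h \<in> cube 1 \<Longrightarrow> \<bar>dform g n i z h\<bar> \<le> K"
proof -
  have "\<forall>i. \<exists>K. \<forall>z\<in>S. \<forall>h\<in>cube 1. \<bar>dform g n i z h\<bar> \<le> K"
  proof
    fix i
    have local: "\<exists>e>0. \<exists>B. \<forall>z\<in>ball y e. \<forall>h\<in>cube 1. \<bar>dform g n i z h\<bar> \<le> B" if "y \<in> S" for y
    proof -
      obtain e B where "e > 0" "\<And>z h. z \<in> ball y e \<Longrightarrow> h \<in> cube 1 \<Longrightarrow> \<bar>dform g n i z h\<bar> \<le> B"
        using line_analytic_at_dform_bounded[OF assms(1)[of i y], where n = n] by blast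
      then show ?thesis
        by blast
    qed
    obtain K where "\<And>z h. z \<in> S \<Longrightarrow> h \<in> cube 1 \<Longrightarrow> \<bar>dform g n i z h\<bar> \<le> K"
      using compact_locally_bounded[OF assms(2) local] by blast
    then show "\<exists>K. \<forall>z\<in>S. \<forall>h\<in>cube 1. \<bar>dform g n i z h\<bar> \<le> K"
      by blast
  qed
  then obtain K where K: "\<And>i z h. z \<in> S \<Longrightarrow> h \<in> cube 1 \<Longrightarrow> \<bar>dform g n i z h\<bar> \<le> K i"
    by (auto dest!: choice)
  have "\<bar>dform g n i z h\<bar> \<le> (\<Sum>i\<in>UNIV. \<bar>K i\<bar>)" if "z \<in> S" "h \<in> cube 1" for i z h
    using K[OF that, of i] member_le_sum[of i UNIV "\<lambda>i. \<bar>K i\<bar>"] by simp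
  then show ?thesis
    using that by blast
qed

lemma deriv_inf_norm_cube:
  "deriv_inf_norm g k z = Max (range (\<lambda>i. SUP h\<in>cube 1. \<bar>dform g k i z h\<bar>))"
  by (simp add: deriv_inf_norm_def cube_def)

lemma abs_dform_le_SUP_deriv_inf_norm:
  fixes g :: "real^'d::finite \<Rightarrow> real^'l::finite"
  assumes "\<And>i y. line_analytic_at (\<lambda>x. g x $ i) y" "compact S" "z \<in> S" "h \<in> cube 1"
  shows "\<bar>dform g n i z h\<bar> \<le> (SUP z\<in>S. deriv_inf_norm g n z)"
proof -
  obtain K where K: "\<And>i z h. z \<in> S \<Longrightarrow> h \<in> cube 1 \<Longrightarrow> \<bar>dform g n i z h\<bar> \<le> K"
    using dform_bounded_on_compact[OF assms(1,2)] by blast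
  have bdd: "bdd_above ((\<lambda>h. \<bar>dform g n i z h\<bar>) ` cube 1)" if "z \<in> S" for i z
    using K[OF that] by (auto intro!: bdd_aboveI)
  have "cube 1 \<noteq> {}"
    by (auto simp: cube_def intro!: exI[of _ 0])
  then have "deriv_inf_norm g n z \<le> K" if "z \<in> S" for z
    unfolding deriv_inf_norm_cube using K[OF that] by (auto intro!: cSUP_least)
  then have "bdd_above (deriv_inf_norm g n ` S)"
    by (auto intro!: bdd_aboveI)
  have "\<bar>dform g n i z h\<bar> \<le> (SUP h\<in>cube 1. \<bar>dform g n i z h\<bar>)"
    by (rule cSUP_upper[OF assms(4) bdd[OF assms(3)]])
  also have "\<dots> \<le> deriv_inf_norm g n z"
    unfolding deriv_inf_norm_cube by (rule Max_ge) auto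
  also have "\<dots> \<le> (SUP z\<in>S. deriv_inf_norm g n z)"
    by (rule cSUP_upper[OF assms(3) \<open>bdd_above (deriv_inf_norm g n ` S)\<close>])
  finally show ?thesis .
qed

lemma taylor_remainder_le_SUP_deriv_inf_norm:
  fixes g :: "real^'d::finite \<Rightarrow> real^'l::finite"
  assumes analytic: "\<And>i y. line_analytic_at (\<lambda>x. g x $ i) y" and c: "c > 0" and z: "z \<in> cube c"
  shows "\<bar>g z $ i - (\<Sum>m\<le>k. (deriv ^^ m) (\<lambda>t. g (t *\<^sub>R z) $ i) 0 / fact m)\<bar>
    \<le> c ^ Suc k / fact (Suc k) * (SUP x\<in>cube c. deriv_inf_norm g (Suc k) x)"
proof -
  obtain \<theta> where \<theta>: "0 < \<theta>" "\<theta> < 1"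
    and "g z $ i - (\<Sum>m\<le>k. (deriv ^^ m) (\<lambda>t. g (t *\<^sub>R z) $ i) 0 / fact m)
      = c ^ Suc k / fact (Suc k) * (deriv ^^ Suc k) (\<lambda>t. g (\<theta> *\<^sub>R z + t *\<^sub>R ((1 / c) *\<^sub>R z)) $ i) 0"
    by (rule taylor_along_ray[OF analytic c z])
  then have remainder: "g z $ i - (\<Sum>m\<le>k. (deriv ^^ m) (\<lambda>t. g (t *\<^sub>R z) $ i) 0 / fact m)
      = c ^ Suc k / fact (Suc k) * dform g (Suc k) i (\<theta> *\<^sub>R z) ((1 / c) *\<^sub>R z)"
    by (simp add: dform_def del: funpow.simps)
  have "\<theta> *\<^sub>R z \<in> cube c" "(1 / c) *\<^sub>R z \<in> cube 1"
    using z c \<theta> by (auto intro!: scaleR_mem_cube)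
  then have "\<bar>dform g (Suc k) i (\<theta> *\<^sub>R z) ((1 / c) *\<^sub>R z)\<bar>
      \<le> (SUP x\<in>cube c. deriv_inf_norm g (Suc k) x)"
    by (rule abs_dform_le_SUP_deriv_inf_norm[OF analytic compact_cube])
  moreover have nonneg: "0 \<le> c ^ Suc k / fact (Suc k)"
    using c by simp
  ultimately show ?thesis
    unfolding remainder abs_mult abs_of_nonneg[OF nonneg] by (rule mult_left_mono)
qed

lemma mat_inf_norm_eq_Max: "mat_inf_norm Y = Max ((\<lambda>(i, j). \<bar>Y $ i $ j\<bar>) ` UNIV)"
proof -
  have "{\<bar>Y $ i $ j\<bar> | i j. True} = (\<lambda>(i, j). \<bar>Y $ i $ j\<bar>) ` UNIV"
    by auto
  then show ?thesis
    by (simp add: mat_inf_norm_def)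
qed

lemma abs_entry_le_mat_inf_norm: "\<bar>Y $ i $ j\<bar> \<le> mat_inf_norm (Y :: real^'n::finite^'m::finite)"
  unfolding mat_inf_norm_eq_Max by (rule Max_ge) auto

lemma mat_inf_norm_le:
  assumes "\<And>i j. \<bar>Y $ i $ j\<bar> \<le> B"
  shows "mat_inf_norm (Y :: real^'n::finite^'m::finite) \<le> B"
  unfolding mat_inf_norm_eq_Max using assms by (subst Max_le_iff) auto

theorem theorem1:
  fixes Z :: "real^'n::finite^'d::finite"
    and f :: "real^'d \<Rightarrow> real^'m::finite"
    and \<nu> :: "'l::finite \<Rightarrow> ('m \<Rightarrow> nat)"
    and c :: "('m \<Rightarrow> nat) \<Rightarrow> real"
    and q q' :: nat and cz :: real
  assumes "q \<ge> 1" and "cz > 0"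
    and "rank Z = min CARD('d) CARD('n)"
    and "mat_inf_norm Z \<le> cz"
    and "real_analytic f"
    and "bij_betw \<nu> UNIV (multi_indices q)"
    and "\<forall>\<mu>\<in>multi_indices q. c \<mu> \<noteq> 0"
    and "q' \<ge> 1"
    and "(CARD('d) + q') choose q' \<le> min CARD('l) CARD('n)"
  shows "\<exists>\<Phi> :: real^'n^'l.
           rank \<Phi> \<le> (CARD('d) + q') choose q' \<and>
           mat_inf_norm ((\<chi> i j. poly_feature \<nu> c (f (column j Z)) $ i) - \<Phi>)
             \<le> cz ^ (q' + 1) / fact (q' + 1) *
                (SUP z\<in>{z. \<forall>j. \<bar>z $ j\<bar> \<le> cz}.
                   deriv_inf_norm (poly_feature \<nu> c \<circ> f) (q' + 1) z)"
proof -
  \<comment> \<open>Only cz > 0, the entry bound on Z and the analyticity of f are needed.\<close>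
  define g where "g = poly_feature \<nu> c \<circ> f"
  have analytic: "\<And>i y. line_analytic_at (\<lambda>x. g x $ i) y"
    using line_analytic_at_poly_feature[OF assms(5)] by (simp add: g_def)
  have column: "column j Z \<in> cube cz" for j
    using abs_entry_le_mat_inf_norm[of Z] assms(4)
    by (auto simp: cube_def column_def intro: order_trans)
  define \<Phi> :: "real^'n^'l" where
    "\<Phi> = (\<chi> i j. \<Sum>m\<le>q'. (deriv ^^ m) (\<lambda>t. g (t *\<^sub>R column j Z) $ i) 0 / fact m)"
  have "rank \<Phi> \<le> (CARD('d) + q') choose q'"
  proof (rule rank_le_of_rows_poly_fun_upto)
    fix i
    obtain p where "p \<in> poly_fun_upto q'"
      and "\<And>z. z \<in> cube cz \<Longrightarrow> (\<Sum>m\<le>q'. (deriv ^^ m) (\<lambda>t. g (t *\<^sub>R z) $ i) 0 / fact m) = p z"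
      using taylor_poly_along_ray[OF analytic assms(2)] by blast
    then show "\<exists>p\<in>poly_fun_upto q'. \<Phi> $ i = (\<chi> j. p (column j Z))"
      using column by (auto simp: \<Phi>_def vec_eq_iff)
  qed
  moreover have "\<bar>g (column j Z) $ i - \<Phi> $ i $ j\<bar>
      \<le> cz ^ Suc q' / fact (Suc q') * (SUP z\<in>cube cz. deriv_inf_norm g (Suc q') z)" for i j
    using taylor_remainder_le_SUP_deriv_inf_norm[OF analytic assms(2) column] by (simp add: \<Phi>_def)
  ultimately show ?thesis
    by (intro exI[of _ \<Phi>] conjI mat_inf_norm_le) (auto simp: g_def cube_def)
qed

end
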